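(* Let $A$ be a real $m\times n$ matrix, $\mathbf b\in\mathbb R^m$, $\mathbf c\in\mathbb R^n$ (row vector), such that the linear program $\max\mathbf c\mathbf x$ s.t. $A\mathbf x\le\mathbf b$, $\mathbf x\ge0$ has unique optimal primal and dual solutions $\mathbf x^*$, $\mathbf y^*$. Let $\lambda=\min(\alpha_P,\alpha_D,\beta_P,\beta_D)$. Then for every primal feasible $\mathbf x$, \[ \|\mathbf x^*-\mathbf x\|_\infty\le\mathbf c(\mathbf x^*-\mathbf x)\left(\frac{1+\|A\|}{\lambda\min(\gamma,1)}\right). \]
   Context: The dual is $\min\mathbf y\mathbf b$ s.t. $\mathbf yA\ge\mathbf c$, $\mathbf y\ge0$. $U=\{i:x^*_i>0\}$, $V=\{j:y^*_j>0\}$, $\bar U,\bar V$ complements. $\alpha_P=\min_{i\in U}x^*_i$, $\alpha_D=\min_{j\in V}y^*_j$, $\beta_P=\min_{j\in\bar V}(b_j-A_{j,:}\mathbf x^* )$, $\beta_D=\min_{i\in\bar U}(\mathbf y^*A_{:,i}-c_i)$, $\gamma=\min_{k\in U}\mathrm{dist}(A_{V,k},\mathrm{span}(A_{V,U\setminus\{k\}}))$, where $A_{V,k}$ is column $k$ restricted to rows $V$ and $\mathrm{span}(A_{V,U\setminus\{k\}})$ is the span of the columns indexed by $U\setminus\{k\}$ restricted to rows $V$. $\|A\|$ is the spectral norm and $\|\cdot\|_\infty$ the max-norm. *)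

theory Defs
  imports "HOL-Analysis.Analysis"
begin

definition primal_feasible :: "real^'n^'m \<Rightarrow> real^'m \<Rightarrow> real^'n \<Rightarrow> bool" where
  "primal_feasible A b x \<longleftrightarrow> (\<forall>j. (A *v x) $ j \<le> b $ j) \<and> (\<forall>i. 0 \<le> x $ i)"

definition primal_optimal :: "real^'n^'m \<Rightarrow> real^'m \<Rightarrow> real^'n \<Rightarrow> real^'n \<Rightarrow> bool" where
  "primal_optimal A b c x \<longleftrightarrow> primal_feasible A b x \<and>
     (\<forall>x'. primal_feasible A b x' \<longrightarrow> c \<bullet> x' \<le> c \<bullet> x)"

definition dual_feasible :: "real^'n^'m \<Rightarrow> real^'n \<Rightarrow> real^'m \<Rightarrow> bool" where
  "dual_feasible A c y \<longleftrightarrow> (\<forall>i. c $ i \<le> (y v* A) $ i) \<and> (\<forall>j. 0 \<le> y $ j)"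

definition dual_optimal :: "real^'n^'m \<Rightarrow> real^'m \<Rightarrow> real^'n \<Rightarrow> real^'m \<Rightarrow> bool" where
  "dual_optimal A b c y \<longleftrightarrow> dual_feasible A c y \<and>
     (\<forall>y'. dual_feasible A c y' \<longrightarrow> y \<bullet> b \<le> y' \<bullet> b)"

definition suppP :: "real^'n \<Rightarrow> 'n set" where "suppP x = {i. 0 < x $ i}"
definition suppD :: "real^'m \<Rightarrow> 'm set" where "suppD y = {j. 0 < y $ j}"

text \<open>lambda = min(alpha_P, alpha_D, beta_P, beta_D), each minimum over an empty index set
  being +infinity (i.e. omitted). The union below is always nonempty.\<close>
definition lp_lambda :: "real^'n^'m \<Rightarrow> real^'m \<Rightarrow> real^'n \<Rightarrow> real^'n \<Rightarrow> real^'m \<Rightarrow> real" where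
  "lp_lambda A b c xs ys = Min (
      {xs $ i | i. i \<in> suppP xs}
    \<union> {ys $ j | j. j \<in> suppD ys}
    \<union> {b $ j - (A *v xs) $ j | j. j \<notin> suppD ys}
    \<union> {(ys v* A) $ i - c $ i | i. i \<notin> suppP xs})"

text \<open>Column k of A restricted to the rows V (embedded in R^m with zero entries outside V).\<close>
definition restr_col :: "real^'n^'m \<Rightarrow> 'm set \<Rightarrow> 'n \<Rightarrow> real^'m" where
  "restr_col A V k = (\<chi> j. if j \<in> V then A $ j $ k else 0)"

text \<open>gamma = min over k in U of dist(A_{V,k}, span(A_{V,U-{k}})); +infinity if U is empty.
  We define min(gamma,1) directly.\<close>
definition lp_gamma_min1 :: "real^'n^'m \<Rightarrow> real^'n \<Rightarrow> real^'m \<Rightarrow> real" where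
  "lp_gamma_min1 A xs ys =
     (let U = suppP xs; V = suppD ys in
      if U = {} then 1
      else min (Min {infdist (restr_col A V k) (span (restr_col A V ` (U - {k}))) | k. k \<in> U}) 1)"

end

theory Submission
  imports Defs
begin

text \<open>
  The homogenised primal system \<open>A d \<le> t b, d \<ge> 0, t (c x\<^sup>*) \<le> c d\<close> has only the
  solutions \<open>t (x\<^sup>*, 1)\<close>, since otherwise normalising \<open>(d, t) + r (x\<^sup>*, 1)\<close> to
  last coordinate 1, for large \<open>r\<close>, would give a second primal optimum. Farkas' lemma
  turns this into dual certificates, which give strong duality and, together with uniqueness
  of \<open>y\<^sup>*\<close>, strict complementarity; hence \<open>\<lambda> > 0\<close>. Uniqueness of \<open>x\<^sup>*\<close> also makes the
  columns \<open>U\<close> of \<open>A\<close>, restricted to the rows \<open>V\<close>, linearly independent, hence \<open>\<gamma> > 0\<close>.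

  For feasible \<open>x\<close> and \<open>e = x\<^sup>* - x\<close>, the duality gap
  \<open>c e = y\<^sup>* (b - A x) + (y\<^sup>* A - c) x\<close> is at least \<open>\<lambda> S\<close>, where \<open>S\<close> is the total
  slack of \<open>x\<close> in the rows \<open>V\<close> plus the mass of \<open>x\<close> off \<open>U\<close>. Off \<open>U\<close>,
  \<open>|e\<^sub>i| = x\<^sub>i \<le> S\<close>. On the rows \<open>V\<close>, \<open>A e\<^sub>U\<close> is the slack of \<open>x\<close> plus \<open>A\<close>
  applied to the part of \<open>x\<close> off \<open>U\<close>, so its norm is at most \<open>(1 + \<parallel>A\<parallel>) S\<close>,
  while by definition of \<open>\<gamma>\<close> it is at least \<open>\<gamma> |e\<^sub>i|\<close> for \<open>i \<in> U\<close>.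
\<close>

section \<open>Farkas' lemma\<close>

lemma convex_cone_hull_finite_image_subset:
  fixes f :: "'i \<Rightarrow> 'a::real_vector"
  assumes "finite I"
  shows "convex_cone hull (f ` I) \<subseteq> {(\<Sum>i\<in>I. u i *\<^sub>R f i) | u. \<forall>i\<in>I. 0 \<le> u i}"
  using assms
proof (induction I rule: finite_induct)
  case empty
  then show ?case by (auto intro!: exI[of _ "\<lambda>_. 0"])
next
  case (insert i I)
  show ?case
  proof
    fix x assume "x \<in> convex_cone hull (f ` insert i I)"
    then obtain y z where y: "y \<in> convex_cone hull {f i}" and z: "z \<in> convex_cone hull (f ` I)"
      and x: "x = y + z"
      using convex_cone_hull_Un[of "{f i}" "f ` I"] by auto
    obtain t where t: "0 \<le> t" "y = t *\<^sub>R f i"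
      using y by (auto simp: convex_cone_hull_convex_hull intro: that[of 0])
    obtain u where u: "\<forall>l\<in>I. 0 \<le> u l" "z = (\<Sum>l\<in>I. u l *\<^sub>R f l)"
      using z insert.IH by blast
    have "x = (\<Sum>l\<in>insert i I. (u(i := t)) l *\<^sub>R f l)"
      using insert.hyps by (simp add: x t u) (auto intro: sum.cong)
    moreover have "\<forall>l\<in>insert i I. 0 \<le> (u(i := t)) l" using t u by simp
    ultimately show "x \<in> {(\<Sum>l\<in>insert i I. u l *\<^sub>R f l) | u. \<forall>l\<in>insert i I. 0 \<le> u l}" by blast
  qed
qed

lemma farkas_lemma:
  fixes f :: "'i \<Rightarrow> 'a::euclidean_space"
  assumes fin: "finite I" and valid: "\<And>v. \<forall>i\<in>I. f i \<bullet> v \<le> 0 \<Longrightarrow> g \<bullet> v \<le> 0"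
  obtains u where "\<forall>i\<in>I. 0 \<le> u i" "g = (\<Sum>i\<in>I. u i *\<^sub>R f i)"
proof -
  let ?K = "convex_cone hull (f ` I)"
  have "g \<in> ?K"
  proof (rule ccontr)
    assume "g \<notin> ?K"
    then obtain a \<beta> where sep: "a \<bullet> g < \<beta>" "\<forall>x\<in>?K. \<beta> < a \<bullet> x"
      using separating_hyperplane_closed_point[of ?K g] fin
      by (auto simp: convex_convex_cone_hull closed_convex_cone_hull)
    have \<beta>_neg: "\<beta> < 0"
      using sep(2) convex_cone_hull_contains_0 by fastforce
    have "0 \<le> a \<bullet> x" if "x \<in> ?K" for x
    proof (rule ccontr)
      assume neg: "\<not> 0 \<le> a \<bullet> x"
      have "(\<beta> / (a \<bullet> x)) *\<^sub>R x \<in> ?K"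
        using that neg \<beta>_neg conic_convex_cone_hull[of "f ` I"]
        by (auto simp: conic_def divide_nonpos_neg)
      then show False using sep(2) neg by fastforce
    qed
    then have "\<forall>i\<in>I. f i \<bullet> (- a) \<le> 0"
      using hull_inc[of _ "f ` I" convex_cone] by (force simp: inner_commute)
    then have "0 \<le> a \<bullet> g" using valid[of "- a"] by (simp add: inner_commute)
    then show False using sep(1) \<beta>_neg by simp
  qed
  then show ?thesis
    using convex_cone_hull_finite_image_subset[OF fin] that by blast
qed

lemma sum_UNIV_option_Plus:
  fixes F :: "('m::finite + 'n::finite) option \<Rightarrow> 'b::comm_monoid_add"
  shows "(\<Sum>k\<in>UNIV. F k) = F None + (\<Sum>j\<in>UNIV. F (Some (Inl j))) + (\<Sum>i\<in>UNIV. F (Some (Inr i)))"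
proof -
  have "(\<Sum>k\<in>UNIV. F (Some k)) = (\<Sum>j\<in>UNIV. F (Some (Inl j))) + (\<Sum>i\<in>UNIV. F (Some (Inr i)))"
    by (simp add: sum.Plus o_def flip: UNIV_Plus_UNIV)
  then show ?thesis by (simp add: UNIV_option_conv sum.reindex add.assoc)
qed

lemma vector_matrix_mult_eq_sum_rows: "(y :: real^'m) v* A = (\<Sum>j\<in>UNIV. y $ j *\<^sub>R A $ j)"
  by (simp add: vec_eq_iff vector_matrix_mult_def sum_component mult.commute)

lemma vector_matrix_mult_scaleR: "(t *\<^sub>R y :: real^'m) v* A = t *\<^sub>R (y v* A)"
  by (simp add: vec_eq_iff vector_matrix_mult_def sum_distrib_left mult.assoc)

lemma axis_vector_matrix_mult: "(axis j 1 :: real^'m) v* A = A $ j"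
  by (simp add: vector_matrix_mult_eq_sum_rows axis_def if_distrib[of "\<lambda>a. a *\<^sub>R _"] cong: if_cong)

lemma inner_nonneg_cart: "0 \<le> u \<Longrightarrow> 0 \<le> v \<Longrightarrow> 0 \<le> u \<bullet> (v :: real^'n)"
  by (simp add: inner_vec_def less_eq_vec_def sum_nonneg)

lemma inner_eq_0_nonneg_cart:
  assumes "0 \<le> u" "0 \<le> v" "u \<bullet> (v :: real^'n) = 0"
  shows "u $ i * v $ i = 0"
  using assms sum_nonneg_eq_0_iff[of UNIV "\<lambda>i. u $ i * v $ i"]
  by (simp add: inner_vec_def less_eq_vec_def)

definition vec_restrict :: "'m set \<Rightarrow> real^'m \<Rightarrow> real^'m" where
  "vec_restrict V v = (\<chi> j. if j \<in> V then v $ j else 0)"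

lemma vec_restrict_nth [simp]: "vec_restrict V v $ j = (if j \<in> V then v $ j else 0)"
  by (simp add: vec_restrict_def)

lemma linear_vec_restrict: "linear (vec_restrict V)"
  by (rule linearI) (simp_all add: vec_eq_iff)

lemma linear_vec_restrict_matrix: "linear (\<lambda>v. vec_restrict V (A *v v))"
  using linear_compose[OF matrix_vector_mul_linear linear_vec_restrict] by (simp add: o_def)

lemma norm_vec_restrict_le: "norm (vec_restrict V v) \<le> norm v"
  by (rule norm_le_componentwise_cart) simp

lemma norm_vec_restrict_le_sum: "norm (vec_restrict V v) \<le> (\<Sum>j\<in>V. \<bar>v $ j\<bar>)"
proof -
  have "norm (vec_restrict V v) \<le> (\<Sum>j\<in>UNIV. \<bar>vec_restrict V v $ j\<bar>)"
    by (rule norm_le_l1_cart)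
  also have "\<dots> = (\<Sum>j\<in>V. \<bar>v $ j\<bar>)"
    by (simp add: if_distrib[of abs] sum.If_cases)
  finally show ?thesis .
qed

lemma restr_col_eq_vec_restrict: "restr_col A V k = vec_restrict V (A *v axis k 1)"
  by (simp add: vec_eq_iff restr_col_def matrix_vector_mult_basis column_def)

lemma span_axis_eq: "span ((\<lambda>i. axis i (1::real)) ` T) = {x :: real^'n. \<forall>i. i \<notin> T \<longrightarrow> x $ i = 0}"
proof -
  have "(\<lambda>i. axis i (1::real)) ` T \<subseteq> (Basis :: (real^'n) set)"
    by (auto simp: Basis_vec_def)
  then show ?thesis
    by (subst span_substd_basis) (auto simp: Basis_vec_def cart_eq_inner_axis axis_eq_axis)
qed

lemma abs_nth_mult_infdist_span_le:
  fixes L :: "real^'n \<Rightarrow> 'a::real_normed_vector"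
  assumes L: "linear L" and supp: "\<forall>i. i \<notin> S \<longrightarrow> v $ i = 0"
  shows "\<bar>v $ k\<bar> * infdist (L (axis k 1)) (span ((\<lambda>i. L (axis i 1)) ` (S - {k}))) \<le> norm (L v)"
proof (cases "v $ k = 0")
  case True
  then show ?thesis by simp
next
  case False
  let ?w = "v - v $ k *\<^sub>R axis k 1"
  have "?w \<in> span ((\<lambda>i. axis i 1) ` (S - {k}))"
    unfolding span_axis_eq using supp by (simp add: axis_def)
  then have "L ?w \<in> span ((\<lambda>i. L (axis i 1)) ` (S - {k}))"
    using span_linear_image[OF L, of "(\<lambda>i. axis i 1) ` (S - {k})"] by (auto simp: image_image)
  then have "- (1 / v $ k) *\<^sub>R L ?w \<in> span ((\<lambda>i. L (axis i 1)) ` (S - {k}))"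
    by (rule span_mul)
  then have "infdist (L (axis k 1)) (span ((\<lambda>i. L (axis i 1)) ` (S - {k})))
      \<le> norm (L (axis k 1) + (1 / v $ k) *\<^sub>R L ?w)"
    using infdist_le by (fastforce simp: dist_norm)
  also have "L (axis k 1) + (1 / v $ k) *\<^sub>R L ?w = (1 / v $ k) *\<^sub>R L v"
    using False by (simp add: linear_diff[OF L] linear_cmul[OF L] algebra_simps)
  finally show ?thesis
    using False by (simp add: field_simps)
qed

section \<open>Linear programs\<close>

lemma primal_feasible_iff: "primal_feasible A b x \<longleftrightarrow> A *v x \<le> b \<and> 0 \<le> x"
  by (simp add: primal_feasible_def less_eq_vec_def)

lemma dual_feasible_iff: "dual_feasible A c y \<longleftrightarrow> c \<le> y v* A \<and> 0 \<le> y"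
  by (simp add: dual_feasible_def less_eq_vec_def)

lemma duality_gap_eq:
  fixes A :: "real^'n^'m"
  shows "y \<bullet> b - c \<bullet> x = y \<bullet> (b - A *v x) + (y v* A - c) \<bullet> x"
  by (simp add: inner_diff_left inner_diff_right dot_lmul_matrix)

lemma weak_duality:
  assumes "primal_feasible A b x" "dual_feasible A c y"
  shows "c \<bullet> x \<le> y \<bullet> b"
  using assms duality_gap_eq[of y b c x A] inner_nonneg_cart[of y "b - A *v x"]
    inner_nonneg_cart[of "y v* A - c" x]
  by (simp add: primal_feasible_iff dual_feasible_iff)

locale lp_unique_optima =
  fixes A :: "real^'n::finite^'m::finite" and b :: "real^'m" and c :: "real^'n"
    and xs :: "real^'n" and ys :: "real^'m"
  assumes xs_optimal: "primal_optimal A b c xs"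
    and xs_unique: "\<forall>x. primal_optimal A b c x \<longrightarrow> x = xs"
    and ys_optimal: "dual_optimal A b c ys"
    and ys_unique: "\<forall>y. dual_optimal A b c y \<longrightarrow> y = ys"
begin

abbreviation "U \<equiv> suppP xs"
abbreviation "V \<equiv> suppD ys"

lemma xs_feasible: "A *v xs \<le> b" "0 \<le> xs"
  using xs_optimal by (simp_all add: primal_optimal_def primal_feasible_iff)

lemma ys_feasible: "c \<le> ys v* A" "0 \<le> ys"
  using ys_optimal by (simp_all add: dual_optimal_def dual_feasible_iff)

lemma xs_zero_off_support: "i \<notin> U \<Longrightarrow> xs $ i = 0"
  using xs_feasible(2) by (auto simp: suppP_def less_eq_vec_def order_le_less)

lemma ys_zero_off_support: "j \<notin> V \<Longrightarrow> ys $ j = 0"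
  using ys_feasible(2) by (auto simp: suppD_def less_eq_vec_def order_le_less)

lemma primal_eq_xs_if_ge:
  assumes "primal_feasible A b x" "c \<bullet> xs \<le> c \<bullet> x"
  shows "x = xs"
proof -
  have "primal_optimal A b c x"
    using assms xs_optimal unfolding primal_optimal_def by (blast intro: order_trans)
  then show ?thesis using xs_unique by blast
qed

lemma dual_eq_ys_if_le:
  assumes "dual_feasible A c y" "y \<bullet> b \<le> ys \<bullet> b"
  shows "y = ys"
proof -
  have "dual_optimal A b c y"
    using assms ys_optimal unfolding dual_optimal_def by (blast intro: order_trans)
  then show ?thesis using ys_unique by blast
qed

lemma primal_cone_eq_ray:
  assumes Ad: "A *v d \<le> t *\<^sub>R b" and d: "0 \<le> d" and obj: "t * (c \<bullet> xs) \<le> c \<bullet> d"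
  shows "d = t *\<^sub>R xs"
proof -
  define r where "r = 1 + \<bar>t\<bar>"
  define s where "s = r + t"
  have rs: "0 < r" "0 < s" by (auto simp: r_def s_def)
  define x where "x = inverse s *\<^sub>R (r *\<^sub>R xs + d)"
  have "A *v x = inverse s *\<^sub>R (A *v (r *\<^sub>R xs + d))"
    by (simp add: x_def matrix_vector_mult_scaleR)
  also have "\<dots> \<le> inverse s *\<^sub>R (s *\<^sub>R b)"
    using add_mono[OF scaleR_left_mono[OF xs_feasible(1)] Ad] rs
    by (intro scaleR_left_mono)
      (simp_all add: s_def matrix_vector_right_distrib matrix_vector_mult_scaleR scaleR_add_left)
  also have "\<dots> = b" using rs by simp
  finally have "A *v x \<le> b" .
  moreover have "0 \<le> x"
    using xs_feasible(2) d rs unfolding x_def by (intro scaleR_nonneg_nonneg add_nonneg_nonneg) simp_all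
  moreover have "c \<bullet> xs \<le> c \<bullet> x"
  proof -
    have "s * (c \<bullet> xs) \<le> c \<bullet> (r *\<^sub>R xs + d)"
      using obj by (simp add: s_def inner_add_right distrib_right)
    moreover have "s * (c \<bullet> x) = c \<bullet> (r *\<^sub>R xs + d)"
      using rs by (simp add: x_def)
    ultimately show ?thesis
      using rs(2) mult_le_cancel_left_pos by metis
  qed
  ultimately have "x = xs" by (intro primal_eq_xs_if_ge) (simp_all add: primal_feasible_iff)
  then have "r *\<^sub>R xs + d = s *\<^sub>R xs"
    using rs unfolding x_def by (metis scaleR_scaleR right_inverse scaleR_one less_irrefl)
  then show ?thesis by (simp add: s_def scaleR_add_left)
qed

lemma ys_le_dual_objective: "dual_feasible A c y \<Longrightarrow> ys \<bullet> b \<le> y \<bullet> b"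
  using ys_optimal by (simp add: dual_optimal_def)

lemma dual_certificate:
  obtains y s where "0 \<le> y" "0 \<le> s" "p \<le> y v* A - s *\<^sub>R c" "y \<bullet> b = s * (c \<bullet> xs) + p \<bullet> xs"
proof -
  \<comment> \<open>the rows of the homogenised primal system in the unknowns \<open>(d, t)\<close>\<close>
  define f :: "('m + 'n) option \<Rightarrow> (real^'n) \<times> real" where
    "f k = (case k of None \<Rightarrow> (- c, c \<bullet> xs) | Some (Inl j) \<Rightarrow> (A $ j, - b $ j)
      | Some (Inr i) \<Rightarrow> (- axis i 1, 0))" for k
  obtain u where u: "\<forall>k\<in>UNIV. 0 \<le> u k" and comb: "(p, - (p \<bullet> xs)) = (\<Sum>k\<in>UNIV. u k *\<^sub>R f k)"
  proof (rule farkas_lemma)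
    fix v :: "(real^'n) \<times> real"
    assume valid: "\<forall>k\<in>UNIV. f k \<bullet> v \<le> 0"
    obtain d t where v: "v = (d, t)" by (cases v)
    have "A *v d \<le> t *\<^sub>R b"
      unfolding less_eq_vec_def
      using valid[rule_format, of "Some (Inl _)"]
      by (simp add: f_def v matrix_vector_mul_component mult.commute)
    moreover have "0 \<le> d"
      unfolding less_eq_vec_def
      using valid[rule_format, of "Some (Inr _)"]
      by (simp add: f_def v cart_eq_inner_axis inner_commute)
    moreover have "t * (c \<bullet> xs) \<le> c \<bullet> d"
      using valid[rule_format, of None] by (simp add: f_def v mult.commute)
    ultimately have "d = t *\<^sub>R xs" by (rule primal_cone_eq_ray)
    then show "(p, - (p \<bullet> xs)) \<bullet> v \<le> 0" by (simp add: v)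
  qed simp
  define y where "y = (\<chi> j. u (Some (Inl j)))"
  define s where "s = u None"
  define \<mu> where "\<mu> = (\<chi> i. u (Some (Inr i)))"
  have "p = y v* A - s *\<^sub>R c - (\<Sum>i\<in>UNIV. \<mu> $ i *\<^sub>R axis i 1)"
    using arg_cong[OF comb, of fst]
    by (simp add: fst_sum sum_UNIV_option_Plus f_def y_def s_def \<mu>_def vector_matrix_mult_eq_sum_rows
        sum_negf)
  also have "(\<Sum>i\<in>UNIV. \<mu> $ i *\<^sub>R axis i 1) = \<mu>"
    using basis_expansion[of \<mu>] by (simp add: scalar_mult_eq_scaleR)
  finally have p: "p = y v* A - s *\<^sub>R c - \<mu>" .
  have "- (p \<bullet> xs) = s * (c \<bullet> xs) - y \<bullet> b"
    using arg_cong[OF comb, of snd]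
    by (simp add: snd_sum sum_UNIV_option_Plus f_def y_def s_def inner_vec_def sum_negf)
  moreover have "0 \<le> y" "0 \<le> s" "0 \<le> \<mu>"
    using u by (simp_all add: y_def s_def \<mu>_def less_eq_vec_def)
  ultimately show ?thesis
    using that[of y s] p by (simp add: algebra_simps)
qed

lemma strong_duality: "c \<bullet> xs = ys \<bullet> b"
proof -
  obtain y s where y: "0 \<le> y" "0 \<le> s" "c \<le> y v* A - s *\<^sub>R c" "y \<bullet> b = (1 + s) * (c \<bullet> xs)"
    using dual_certificate[of c] by (auto simp: algebra_simps)
  define y' where "y' = inverse (1 + s) *\<^sub>R y"
  have "inverse (1 + s) *\<^sub>R ((1 + s) *\<^sub>R c) \<le> inverse (1 + s) *\<^sub>R (y v* A)"
    using y by (intro scaleR_left_mono) (simp_all add: algebra_simps)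
  moreover have "0 \<le> y'"
    unfolding y'_def using y by (intro scaleR_nonneg_nonneg) simp_all
  ultimately have "dual_feasible A c y'"
    using y by (simp add: dual_feasible_iff y'_def vector_matrix_mult_scaleR)
  moreover have "y' \<bullet> b = c \<bullet> xs"
    using y(2,4) by (simp add: y'_def mult.assoc[symmetric] add_nonneg_eq_0_iff)
  ultimately have "ys \<bullet> b \<le> c \<bullet> xs"
    using ys_le_dual_objective by fastforce
  moreover have "c \<bullet> xs \<le> ys \<bullet> b"
    using weak_duality[of A b xs c ys] xs_feasible ys_feasible
    by (simp add: primal_feasible_iff dual_feasible_iff)
  ultimately show ?thesis by simp
qed

lemma dual_perturbation:
  obtains y t where "0 \<le> y" "0 < t" "c + t *\<^sub>R p \<le> y v* A" "y \<bullet> b = ys \<bullet> b + t * (p \<bullet> xs)"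
proof -
  obtain y s where y: "0 \<le> y" "0 \<le> s" "p \<le> y v* A - s *\<^sub>R c" "y \<bullet> b = s * (c \<bullet> xs) + p \<bullet> xs"
    by (rule dual_certificate)
  define t where "t = inverse (1 + s)"
  have t: "0 < t" "t * (1 + s) = 1" using y(2) by (simp_all add: t_def)
  have "c + t *\<^sub>R p = t *\<^sub>R ((1 + s) *\<^sub>R c + p)"
    using t(2) by (simp add: scaleR_add_right)
  also have "\<dots> \<le> t *\<^sub>R (ys v* A + y v* A)"
    using add_mono[OF ys_feasible(1) y(3)] t by (intro scaleR_left_mono) (simp_all add: algebra_simps)
  also have "\<dots> = (t *\<^sub>R (ys + y)) v* A"
    by (simp add: vector_matrix_mult_scaleR vector_matrix_left_distrib)
  finally have feasible: "c + t *\<^sub>R p \<le> (t *\<^sub>R (ys + y)) v* A" .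
  have "(t *\<^sub>R (ys + y)) \<bullet> b = t * ((1 + s) * (ys \<bullet> b) + p \<bullet> xs)"
    using y(4) strong_duality by (simp add: inner_add_left algebra_simps)
  also have "\<dots> = ys \<bullet> b + t * (p \<bullet> xs)"
    using t(2) by (simp add: distrib_left mult.assoc[symmetric])
  finally have objective: "(t *\<^sub>R (ys + y)) \<bullet> b = ys \<bullet> b + t * (p \<bullet> xs)" .
  have "0 \<le> t *\<^sub>R (ys + y)"
    using t ys_feasible(2) y(1) by (intro scaleR_nonneg_nonneg add_nonneg_nonneg) simp_all
  then show ?thesis using that t(1) feasible objective by blast
qed

lemma complementary_slackness:
  shows "ys $ j * (b - A *v xs) $ j = 0" and "(ys v* A - c) $ i * xs $ i = 0"
proof -
  have "0 \<le> ys \<bullet> (b - A *v xs)" "0 \<le> (ys v* A - c) \<bullet> xs"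
    using xs_feasible ys_feasible by (simp_all add: inner_nonneg_cart)
  moreover have "ys \<bullet> (b - A *v xs) + (ys v* A - c) \<bullet> xs = 0"
    using duality_gap_eq[of ys b c xs A] strong_duality by simp
  ultimately have "ys \<bullet> (b - A *v xs) = 0" "(ys v* A - c) \<bullet> xs = 0" by linarith+
  moreover have "0 \<le> b - A *v xs" "0 \<le> ys v* A - c"
    using xs_feasible ys_feasible by simp_all
  ultimately show "ys $ j * (b - A *v xs) $ j = 0" and "(ys v* A - c) $ i * xs $ i = 0"
    using inner_eq_0_nonneg_cart ys_feasible(2) xs_feasible(2) by blast+
qed

lemma dual_tight_on_support: "i \<in> U \<Longrightarrow> (ys v* A) $ i = c $ i"
  using complementary_slackness(2)[of i] by (simp add: suppP_def)

lemma primal_tight_on_support: "j \<in> V \<Longrightarrow> (A *v xs) $ j = b $ j"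
  using complementary_slackness(1)[of j] by (simp add: suppD_def)

lemma dual_slack_pos_off_support:
  assumes "i \<notin> U"
  shows "c $ i < (ys v* A) $ i"
proof -
  obtain y t where y: "0 \<le> y" "0 < t" "c + t *\<^sub>R axis i 1 \<le> y v* A" "y \<bullet> b = ys \<bullet> b"
    using dual_perturbation[of "axis i 1"] xs_zero_off_support[OF assms]
    by (auto simp: inner_commute cart_eq_inner_axis[symmetric])
  have "c \<le> c + t *\<^sub>R axis i 1"
    using y(2) by (simp add: less_eq_vec_def axis_def)
  then have "c \<le> y v* A"
    using y(3) by (rule order_trans)
  then have "y = ys"
    using y by (intro dual_eq_ys_if_le) (simp_all add: dual_feasible_iff)
  then show ?thesis
    using y(2,3) by (auto simp: less_eq_vec_def axis_def dest: spec[of _ i])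
qed

lemma primal_slack_pos_off_support:
  assumes "j \<notin> V"
  shows "(A *v xs) $ j < b $ j"
proof (rule ccontr)
  assume "\<not> (A *v xs) $ j < b $ j"
  then have tight: "A $ j \<bullet> xs = b $ j"
    using xs_feasible(1)[unfolded less_eq_vec_def, rule_format, of j]
    by (simp add: matrix_vector_mul_component[symmetric])
  obtain y t where y: "0 \<le> y" "0 < t" "c - t *\<^sub>R A $ j \<le> y v* A" "y \<bullet> b = ys \<bullet> b - t * b $ j"
    using dual_perturbation[of "- A $ j"] by (auto simp: tight)
  define y' where "y' = y + t *\<^sub>R axis j 1"
  have "y' v* A = y v* A + t *\<^sub>R A $ j"
    by (simp add: y'_def vector_matrix_left_distrib vector_matrix_mult_scaleR axis_vector_matrix_mult)
  moreover have "0 \<le> y'"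
    using y(1,2) by (simp add: y'_def less_eq_vec_def axis_def)
  moreover have "y' \<bullet> b = ys \<bullet> b"
  proof -
    have "axis j 1 \<bullet> b = b $ j" by (simp add: cart_eq_inner_axis inner_commute)
    then show ?thesis using y(4) by (simp add: y'_def inner_add_left)
  qed
  ultimately have "y' = ys"
    using y(3) by (intro dual_eq_ys_if_le) (auto simp: dual_feasible_iff algebra_simps)
  then have "0 < ys $ j"
    using y(1,2) by (auto simp: y'_def less_eq_vec_def axis_def dest: spec[of _ j] intro: add_nonneg_pos)
  then show False using assms by (simp add: suppD_def)
qed

abbreviation "lam \<equiv> lp_lambda A b c xs ys"
abbreviation "gam \<equiv> lp_gamma_min1 A xs ys"

lemma lambda_pos: "0 < lam"
  unfolding lp_lambda_def
  using dual_slack_pos_off_support primal_slack_pos_off_support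
  by (subst Min_gr_iff) (auto simp: suppP_def suppD_def)

lemma lambda_le:
  shows "i \<in> U \<Longrightarrow> lam \<le> xs $ i" and "j \<in> V \<Longrightarrow> lam \<le> ys $ j"
    and "j \<notin> V \<Longrightarrow> lam \<le> b $ j - (A *v xs) $ j" and "i \<notin> U \<Longrightarrow> lam \<le> (ys v* A) $ i - c $ i"
  unfolding lp_lambda_def by (rule Min_le; auto)+

text \<open>Such a \<open>d\<close> keeps the tight constraints tight and, by complementary slackness, the
  objective unchanged, so \<open>xs + \<epsilon> d\<close> would be a second optimum for small \<open>\<epsilon> > 0\<close>.\<close>
lemma face_direction_eq_0:
  assumes tight: "\<forall>j\<in>V. (A *v d) $ j = 0" and supp: "\<forall>i. i \<notin> U \<longrightarrow> d $ i = 0"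
  shows "d = 0"
proof -
  have "c \<bullet> d = (ys v* A) \<bullet> d"
    unfolding inner_vec_def using supp dual_tight_on_support by (intro sum.cong) (auto, metis)
  also have "\<dots> = ys \<bullet> (A *v d)" by (rule dot_lmul_matrix)
  also have "\<dots> = 0"
    unfolding inner_vec_def using tight ys_zero_off_support by (intro sum.neutral) auto
  finally have obj: "c \<bullet> d = 0" .
  define \<epsilon> where "\<epsilon> = lam / (1 + norm d + norm (A *v d))"
  have \<epsilon>: "0 < \<epsilon>" "\<epsilon> * norm d \<le> lam" "\<epsilon> * norm (A *v d) \<le> lam"
    using lambda_pos by (auto simp: \<epsilon>_def field_simps add_pos_nonneg)
  have "(A *v (xs + \<epsilon> *\<^sub>R d)) $ j \<le> b $ j" for j
  proof (cases "j \<in> V")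
    case True
    then show ?thesis using tight primal_tight_on_support
      by (simp add: matrix_vector_right_distrib matrix_vector_mult_scaleR)
  next
    case False
    have "\<epsilon> * (A *v d) $ j \<le> \<epsilon> * norm (A *v d)"
      using \<epsilon>(1) component_le_norm_cart[of "A *v d" j] by (intro mult_left_mono) auto
    then show ?thesis using \<epsilon>(3) lambda_le(3)[OF False]
      by (simp add: matrix_vector_right_distrib matrix_vector_mult_scaleR)
  qed
  moreover have "0 \<le> (xs + \<epsilon> *\<^sub>R d) $ i" for i
  proof (cases "i \<in> U")
    case True
    have "\<epsilon> * - d $ i \<le> \<epsilon> * norm d"
      using \<epsilon>(1) component_le_norm_cart[of d i] by (intro mult_left_mono) auto
    then show ?thesis using \<epsilon>(2) lambda_le(1)[OF True] by simp
  next
    case False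
    then show ?thesis using supp xs_zero_off_support by simp
  qed
  ultimately have "xs + \<epsilon> *\<^sub>R d = xs"
    using obj by (intro primal_eq_xs_if_ge) (simp_all add: primal_feasible_def inner_add_right)
  then show ?thesis using \<epsilon>(1) by simp
qed

lemma restr_col_notin_span:
  assumes k: "k \<in> U"
  shows "restr_col A V k \<notin> span (restr_col A V ` (U - {k}))"
proof
  let ?L = "\<lambda>v. vec_restrict V (A *v v)"
  have col: "restr_col A V = (\<lambda>i. ?L (axis i 1))"
    by (simp add: fun_eq_iff restr_col_eq_vec_restrict)
  assume "restr_col A V k \<in> span (restr_col A V ` (U - {k}))"
  then obtain w where w: "w \<in> span ((\<lambda>i. axis i 1) ` (U - {k}))" and Lw: "?L (axis k 1) = ?L w"
    unfolding col span_linear_image[OF linear_vec_restrict_matrix[of V A], of "(\<lambda>i. axis i 1) ` _",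
      unfolded image_image] by blast
  then have w_supp: "\<forall>i. i \<notin> U - {k} \<longrightarrow> w $ i = 0"
    unfolding span_axis_eq by blast
  define d where "d = axis k 1 - w"
  have "\<forall>j\<in>V. (A *v d) $ j = 0"
  proof
    fix j assume "j \<in> V"
    then show "(A *v d) $ j = 0"
      using Lw[unfolded vec_eq_iff, rule_format, of j]
      by (simp add: d_def matrix_vector_mult_diff_distrib)
  qed
  moreover have "\<forall>i. i \<notin> U \<longrightarrow> d $ i = 0"
    using w_supp k by (auto simp: d_def axis_def)
  ultimately have "d = 0" by (rule face_direction_eq_0)
  moreover have "d $ k = 1"
    using w_supp by (simp add: d_def)
  ultimately show False by simp
qed

lemma gamma_le_one: "gam \<le> 1"
  by (simp add: lp_gamma_min1_def Let_def)

lemma gamma_le_infdist: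
  "k \<in> U \<Longrightarrow> gam \<le> infdist (restr_col A V k) (span (restr_col A V ` (U - {k})))"
  by (auto simp: lp_gamma_min1_def Let_def intro!: min.coboundedI1 Min_le)

lemma gamma_pos: "0 < gam"
proof -
  have "0 < infdist (restr_col A V k) (span (restr_col A V ` (U - {k})))" if "k \<in> U" for k
    using restr_col_notin_span[OF that]
    by (metis closed_subspace subspace_span span_zero empty_iff infdist_pos_not_in_closed)
  then show ?thesis
    by (auto simp: lp_gamma_min1_def Let_def)
qed

section \<open>The error bound\<close>

definition support_slack :: "real^'n \<Rightarrow> real" where
  "support_slack x = (\<Sum>j\<in>V. b $ j - (A *v x) $ j) + (\<Sum>i\<in>- U. x $ i)"

lemma lambda_support_slack_le_gap:
  assumes x: "primal_feasible A b x"
  shows "lam * support_slack x \<le> c \<bullet> (xs - x)"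
proof -
  have x: "A *v x \<le> b" "0 \<le> x" using x by (simp_all add: primal_feasible_iff)
  have "lam * support_slack x = (\<Sum>j\<in>V. lam * (b - A *v x) $ j) + (\<Sum>i\<in>- U. lam * x $ i)"
    by (simp add: support_slack_def sum_distrib_left distrib_left)
  also have "\<dots> \<le> (\<Sum>j\<in>V. ys $ j * (b - A *v x) $ j) + (\<Sum>i\<in>- U. (ys v* A - c) $ i * x $ i)"
    using lambda_le(2,4) x by (intro add_mono sum_mono mult_right_mono) (auto simp: less_eq_vec_def)
  also have "\<dots> \<le> ys \<bullet> (b - A *v x) + (ys v* A - c) \<bullet> x"
    unfolding inner_vec_def inner_real_def using x ys_feasible
    by (intro add_mono[OF sum_mono2 sum_mono2]) (auto simp: less_eq_vec_def)
  also have "\<dots> = c \<bullet> (xs - x)"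
    using duality_gap_eq[of ys b c x A] strong_duality by (simp add: inner_diff_right)
  finally show ?thesis .
qed


lemma gamma_deviation_le_support_slack:
  assumes x: "primal_feasible A b x"
  shows "gam * \<bar>(xs - x) $ i\<bar> \<le> (1 + onorm (\<lambda>v. A *v v)) * support_slack x"
proof -
  define N where "N = onorm (\<lambda>v. A *v v)"
  define e where "e = xs - x"
  have x: "A *v x \<le> b" "0 \<le> x" using x by (simp_all add: primal_feasible_iff)
  have N: "0 \<le> N" unfolding N_def by (simp add: onorm_pos_le)
  have row_slack: "0 \<le> (\<Sum>j\<in>V. b $ j - (A *v x) $ j)"
    using x(1) by (intro sum_nonneg) (simp add: less_eq_vec_def)
  have col_slack: "0 \<le> (\<Sum>i\<in>- U. x $ i)"
    using x(2) by (intro sum_nonneg) (simp add: less_eq_vec_def)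
  show ?thesis
  proof (cases "i \<in> U")
    case False
    have "gam * \<bar>e $ i\<bar> \<le> \<bar>e $ i\<bar>"
      using gamma_pos gamma_le_one by (simp add: mult_left_le_one_le)
    also have "\<bar>e $ i\<bar> = x $ i"
      using False x(2) xs_zero_off_support by (simp add: e_def less_eq_vec_def)
    also have "\<dots> \<le> (\<Sum>i\<in>- U. x $ i)"
      using False x(2) by (intro member_le_sum) (auto simp: less_eq_vec_def)
    also have "\<dots> \<le> (1 + N) * support_slack x"
      using N row_slack col_slack by (simp add: support_slack_def algebra_simps)
    finally show ?thesis by (simp add: e_def N_def)
  next
    case True
    have split: "vec_restrict U e = e + vec_restrict (- U) x"
      using xs_zero_off_support by (simp add: vec_eq_iff e_def)
    have rows: "vec_restrict V (A *v e) = vec_restrict V (b - A *v x)"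
      using primal_tight_on_support by (simp add: vec_eq_iff e_def matrix_vector_mult_diff_distrib)
    have "gam * \<bar>e $ i\<bar>
        \<le> \<bar>vec_restrict U e $ i\<bar> * infdist (restr_col A V i) (span (restr_col A V ` (U - {i})))"
      using mult_right_mono[OF gamma_le_infdist[OF True] abs_ge_zero[of "e $ i"]] True
      by (simp add: mult.commute)
    also have "\<dots> \<le> norm (vec_restrict V (A *v vec_restrict U e))"
      using abs_nth_mult_infdist_span_le[OF linear_vec_restrict_matrix[of V A], of U "vec_restrict U e" i]
      by (simp add: restr_col_eq_vec_restrict)
    also have "\<dots> \<le> norm (vec_restrict V (b - A *v x)) + norm (A *v vec_restrict (- U) x)"
      using norm_vec_restrict_le[of V "A *v vec_restrict (- U) x"]
      by (simp add: split rows matrix_vector_right_distrib linear_add[OF linear_vec_restrict]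
          norm_triangle_le)
    also have "\<dots> \<le> (\<Sum>j\<in>V. b $ j - (A *v x) $ j) + N * (\<Sum>i\<in>- U. x $ i)"
    proof (rule add_mono)
      show "norm (vec_restrict V (b - A *v x)) \<le> (\<Sum>j\<in>V. b $ j - (A *v x) $ j)"
        using norm_vec_restrict_le_sum[of V "b - A *v x"] x(1) by (simp add: less_eq_vec_def)
      have "norm (A *v vec_restrict (- U) x) \<le> N * norm (vec_restrict (- U) x)"
        unfolding N_def by (simp add: onorm)
      also have "\<dots> \<le> N * (\<Sum>i\<in>- U. x $ i)"
        using N norm_vec_restrict_le_sum[of "- U" x] x(2)
        by (intro mult_left_mono) (simp_all add: less_eq_vec_def)
      finally show "norm (A *v vec_restrict (- U) x) \<le> N * (\<Sum>i\<in>- U. x $ i)" .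
    qed
    also have "\<dots> \<le> (1 + N) * support_slack x"
      using N row_slack col_slack by (simp add: support_slack_def algebra_simps)
    finally show ?thesis by (simp add: e_def N_def)
  qed
qed

lemma deviation_bound:
  assumes x: "primal_feasible A b x"
  shows "infnorm (xs - x) \<le> (c \<bullet> (xs - x)) * ((1 + onorm (\<lambda>v. A *v v)) / (lam * gam))"
proof -
  define N where "N = onorm (\<lambda>v. A *v v)"
  have N: "0 \<le> N" unfolding N_def by (simp add: onorm_pos_le)
  have "\<bar>(xs - x) $ i\<bar> \<le> (c \<bullet> (xs - x)) * ((1 + N) / (lam * gam))" for i
  proof -
    have "\<bar>(xs - x) $ i\<bar> \<le> (1 + N) * support_slack x / gam"
      using gamma_deviation_le_support_slack[OF x, of i] gamma_pos
      by (simp add: N_def pos_le_divide_eq mult.commute)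
    also have "\<dots> = (lam * support_slack x) * ((1 + N) / (lam * gam))"
      using lambda_pos gamma_pos by (simp add: field_simps)
    also have "\<dots> \<le> (c \<bullet> (xs - x)) * ((1 + N) / (lam * gam))"
      using lambda_support_slack_le_gap[OF x] lambda_pos gamma_pos N
      by (intro mult_right_mono) simp_all
    finally show ?thesis .
  qed
  then show ?thesis
    unfolding infnorm_cart N_def by (intro cSup_least) auto
qed

end

theorem mainTheorem11:
  fixes A :: "real^'n^'m" and b :: "real^'m" and c :: "real^'n"
    and xs :: "real^'n" and ys :: "real^'m"
  assumes "primal_optimal A b c xs"
    and "\<forall>x. primal_optimal A b c x \<longrightarrow> x = xs"
    and "dual_optimal A b c ys"
    and "\<forall>y. dual_optimal A b c y \<longrightarrow> y = ys"
  shows "\<forall>x. primal_feasible A b x \<longrightarrow>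
    infnorm (xs - x) \<le> (c \<bullet> (xs - x)) *
      ((1 + onorm (\<lambda>v. A *v v)) / (lp_lambda A b c xs ys * lp_gamma_min1 A xs ys))"
proof -
  interpret lp_unique_optima A b c xs ys
    using assms by unfold_locales
  show ?thesis using deviation_bound by blast
qed

end
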